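(* For $(x,y)\in\mathbb{Z}^2$ let $\epsilon=\epsilon(x,y)$ be $1/2$ if $x$ and $y$ are both odd and $0$ otherwise, so that $(x,y,\epsilon+m)\in H(\mathbb{Z})$ for all $m\in\mathbb{Z}$. Then the word length $|(x,y,\epsilon+m)|_{\sf std}$ is a nondecreasing function of $m\in\{0,1,2,\dots\}$.
   Context: $H(\mathbb{Z})$ is written in exponential coordinates: the group law is $(x,y,z)(x',y',z')=(x+x',y+y',z+z'+\tfrac12(xy'-yx'))$ and $H(\mathbb{Z})=\{(x,y,z):x,y\in\mathbb{Z},z\in\mathbb{Z}+\epsilon(x,y)\}$. $|\cdot|_{\sf std}$ is word length with respect to ${\sf std}=\{\pm{\sf e}_1,\pm{\sf e}_2\}$, ${\sf e}_1=(1,0,0)$, ${\sf e}_2=(0,1,0)$. *)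

theory Defs
  imports Complex_Main
begin

text \<open>Heisenberg group in exponential coordinates, elements as real triples.\<close>
type_synonym heis = "real \<times> real \<times> real"

definition hmult :: "heis \<Rightarrow> heis \<Rightarrow> heis" where
  "hmult p q = (case p of (x, y, z) \<Rightarrow> case q of (x', y', z') \<Rightarrow>
     (x + x', y + y', z + z' + (x * y' - y * x') / 2))"

definition hone :: heis where "hone = (0, 0, 0)"

definition e1 :: heis where "e1 = (1, 0, 0)"
definition e2 :: heis where "e2 = (0, 1, 0)"

text \<open>Inverse in exponential coordinates is negation.\<close>
definition std :: "heis set" where
  "std = {e1, (-1, 0, 0), e2, (0, -1, 0)}"

definition eps :: "int \<Rightarrow> int \<Rightarrow> real" where
  "eps x y = (if odd x \<and> odd y then 1/2 else 0)"

definition word_eval :: "heis list \<Rightarrow> heis" where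
  "word_eval w = foldr hmult w hone"

definition word_len_std :: "heis \<Rightarrow> nat" where
  "word_len_std g = (LEAST n. \<exists>w. set w \<subseteq> std \<and> length w = n \<and> word_eval w = g)"

end

theory Submission
  imports Defs
begin

text \<open>Let \<open>w\<close> be a geodesic word for \<open>(x, y, z)\<close> with \<open>z \<ge> 0\<close>. Since the generators have
  vanishing central coordinate, the reversed word evaluates to \<open>(x, y, -z)\<close>. Reversal is a
  product of swaps of adjacent letters; such a swap keeps the length and the first two
  coordinates and changes the central one by the area form of the two letters, which is
  \<open>-1\<close>, \<open>0\<close> or \<open>1\<close>. Along the way from \<open>w\<close> to its reverse the central coordinate therefore
  passes through every value of \<open>z + \<int>\<close> in \<open>[-z, z]\<close>, so all these points have word length
  at most \<open>|w|\<close>.\<close>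

lemma hmult_assoc: "hmult (hmult a b) c = hmult a (hmult b c)"
  by (cases a; cases b; cases c) (simp add: hmult_def field_simps)

lemma hmult_hone_left [simp]: "hmult hone q = q"
  by (cases q) (simp add: hmult_def hone_def)

lemma hmult_hone_right [simp]: "hmult q hone = q"
  by (cases q) (simp add: hmult_def hone_def)

lemma word_eval_Nil [simp]: "word_eval [] = hone"
  by (simp add: word_eval_def)

lemma word_eval_Cons [simp]: "word_eval (a # w) = hmult a (word_eval w)"
  by (simp add: word_eval_def)

lemma word_eval_append [simp]: "word_eval (u @ v) = hmult (word_eval u) (word_eval v)"
  by (induction u) (simp_all add: hmult_assoc)

definition area :: "heis \<Rightarrow> heis \<Rightarrow> real" where
  "area a b = fst a * fst (snd b) - fst (snd a) * fst b"

lemma hmult_central_right: "hmult (x, y, z) (0, 0, c) = (x, y, z + c)"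
  by (simp add: hmult_def)

lemma hmult_central_commute: "hmult (0, 0, c) p = hmult p (0, 0, c)"
  by (cases p) (simp add: hmult_def)

lemma hmult_commutator: "hmult a b = hmult (hmult b a) (0, 0, area a b)"
  by (cases a; cases b) (simp add: hmult_def area_def field_simps)

lemma area_std: "a \<in> std \<Longrightarrow> b \<in> std \<Longrightarrow> area a b \<in> {-1, 0, 1}"
  by (auto simp: std_def e1_def e2_def area_def)

definition hflip :: "heis \<Rightarrow> heis" where
  "hflip p = (case p of (x, y, z) \<Rightarrow> (x, y, -z))"

lemma hflip_hmult: "hflip (hmult p q) = hmult (hflip q) (hflip p)"
  by (cases p; cases q) (simp add: hflip_def hmult_def field_simps)

lemma hflip_hone: "hflip hone = hone"
  by (simp add: hflip_def hone_def)

lemma word_eval_rev: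
  assumes "\<And>a. a \<in> set w \<Longrightarrow> hflip a = a"
  shows "word_eval (rev w) = hflip (word_eval w)"
  using assms by (induction w) (simp_all add: hflip_hmult hflip_hone)

lemma hflip_std: "a \<in> std \<Longrightarrow> hflip a = a"
  by (auto simp: std_def hflip_def e1_def e2_def)

definition adjacent_swap :: "'a list \<Rightarrow> 'a list \<Rightarrow> bool" where
  "adjacent_swap w w' \<longleftrightarrow> (\<exists>p a b q. w = p @ a # b # q \<and> w' = p @ b # a # q)"

lemma adjacent_swap_Cons: "adjacent_swap w w' \<Longrightarrow> adjacent_swap (c # w) (c # w')"
  unfolding adjacent_swap_def by (metis append_Cons)

lemma adjacent_swaps_Cons: "adjacent_swap\<^sup>*\<^sup>* w w' \<Longrightarrow> adjacent_swap\<^sup>*\<^sup>* (c # w) (c # w')"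
  by (induction rule: rtranclp_induct) (auto intro: rtranclp.rtrancl_into_rtrancl adjacent_swap_Cons)

lemma adjacent_swaps_move_to_end: "adjacent_swap\<^sup>*\<^sup>* (c # w) (w @ [c])"
proof (induction w)
  case (Cons d w)
  have "adjacent_swap (c # d # w) (d # c # w)"
    unfolding adjacent_swap_def by (metis append_Nil)
  with adjacent_swaps_Cons[OF Cons] show ?case
    by (simp add: converse_rtranclp_into_rtranclp)
qed simp

lemma adjacent_swaps_rev: "adjacent_swap\<^sup>*\<^sup>* w (rev w)"
proof (induction w)
  case (Cons c w)
  from rtranclp_trans[OF adjacent_swaps_Cons[OF Cons] adjacent_swaps_move_to_end]
  show ?case by simp
qed simp

lemma word_eval_adjacent_swap:
  assumes "adjacent_swap w w'"
  obtains a b where "a \<in> set w" "b \<in> set w"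
    "word_eval w = hmult (word_eval w') (0, 0, area a b)"
proof -
  obtain p a b q where w: "w = p @ a # b # q" and w': "w' = p @ b # a # q"
    using assms unfolding adjacent_swap_def by blast
  have "word_eval w = hmult (word_eval p) (hmult (hmult a b) (word_eval q))"
    using w by (simp add: hmult_assoc)
  also have "\<dots> = hmult (word_eval p) (hmult (hmult (hmult b a) (0, 0, area a b)) (word_eval q))"
    unfolding hmult_commutator[of a b] ..
  also have "\<dots> = hmult (word_eval w') (0, 0, area a b)"
    using w' by (simp add: hmult_assoc hmult_central_commute)
  finally show ?thesis using w by (intro that) auto
qed

lemma rtranclp_discrete_ivt:
  fixes f :: "'a \<Rightarrow> real"
  assumes "R\<^sup>*\<^sup>* a b" "P a"
    and "\<And>u v. R u v \<Longrightarrow> P u \<Longrightarrow> P v \<and> f v - f u \<in> {-1, 0, 1}"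
    and "f b \<le> t" "t \<le> f a" "t - f a \<in> \<int>"
  shows "\<exists>c. P c \<and> f c = t"
  using assms(1,2,4-)
proof (induction rule: converse_rtranclp_induct)
  case base
  then show ?case by force
next
  case (step a a')
  have "P a'" and df: "f a' - f a \<in> {-1, 0, 1}"
    using assms(3)[OF step.hyps(1) step.prems(1)] by auto
  show ?case
  proof (cases "t \<le> f a'")
    case True
    have "f a' - f a \<in> \<int>" using df by auto
    moreover have "t - f a' = (t - f a) - (f a' - f a)" by simp
    ultimately have "t - f a' \<in> \<int>" using step.prems(4) by (metis Ints_diff)
    then show ?thesis using step.IH[OF \<open>P a'\<close> step.prems(2) True] by blast
  next
    case False
    from \<open>t - f a \<in> \<int>\<close> obtain k where k: "t - f a = of_int k" by (metis Ints_cases)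
    from False df step.prems(3) k have "-1 < k" "k \<le> 0" by auto
    then have "t = f a" using k by simp
    then show ?thesis using step.prems(1) by blast
  qed
qed

definition heis_xy :: "heis \<Rightarrow> real \<times> real" where
  "heis_xy g = (fst g, fst (snd g))"

definition heis_z :: "heis \<Rightarrow> real" where
  "heis_z g = snd (snd g)"

lemma std_word_adjacent_swap:
  assumes "adjacent_swap w w'" "set w \<subseteq> std"
  shows "set w' = set w" "length w' = length w"
    "heis_xy (word_eval w') = heis_xy (word_eval w)"
    "heis_z (word_eval w') - heis_z (word_eval w) \<in> {-1, 0, 1}"
proof -
  from assms(1) obtain p a b q where "w = p @ a # b # q" "w' = p @ b # a # q"
    unfolding adjacent_swap_def by blast
  then show "set w' = set w" "length w' = length w" by auto
  obtain a b where "a \<in> set w" "b \<in> set w"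
    and eval: "word_eval w = hmult (word_eval w') (0, 0, area a b)"
    by (rule word_eval_adjacent_swap[OF assms(1)])
  with assms(2) have ab: "a \<in> std" "b \<in> std" by auto
  obtain x y z where w': "word_eval w' = (x, y, z)" by (cases "word_eval w'")
  then have "word_eval w = (x, y, z + area a b)" by (simp add: eval hmult_central_right)
  with w' show "heis_xy (word_eval w') = heis_xy (word_eval w)"
    "heis_z (word_eval w') - heis_z (word_eval w) \<in> {-1, 0, 1}"
    using area_std[OF ab] by (auto simp: heis_xy_def heis_z_def)
qed

lemma std_word_shift_z:
  assumes "set w \<subseteq> std" "word_eval w = (x, y, z)"
    and "-z \<le> t" "t \<le> z" "t - z \<in> \<int>"
  shows "\<exists>u. set u \<subseteq> std \<and> length u = length w \<and> word_eval u = (x, y, t)"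
proof -
  define P where "P u \<longleftrightarrow> set u \<subseteq> std \<and> length u = length w \<and> heis_xy (word_eval u) = (x, y)"
    for u :: "heis list"
  have "word_eval (rev w) = (x, y, -z)"
    using assms(1,2) hflip_std by (subst word_eval_rev) (auto simp: hflip_def)
  then have "\<exists>u. P u \<and> heis_z (word_eval u) = t"
    using assms std_word_adjacent_swap
    by (intro rtranclp_discrete_ivt[OF adjacent_swaps_rev[of w], where P = P])
       (auto simp: P_def heis_xy_def heis_z_def)
  then show ?thesis
    unfolding P_def heis_xy_def heis_z_def by (metis prod.collapse prod.inject)
qed

definition std_generated :: "heis set" where
  "std_generated = {word_eval w | w. set w \<subseteq> std}"

lemma std_word_mem_std_generated:
  "set w \<subseteq> std \<Longrightarrow> word_eval w \<in> std_generated"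
  unfolding std_generated_def by blast

lemma std_generatedE:
  assumes "g \<in> std_generated"
  obtains w where "set w \<subseteq> std" "word_eval w = g"
  using assms unfolding std_generated_def by blast

lemma word_len_std_le:
  "set w \<subseteq> std \<Longrightarrow> word_len_std (word_eval w) \<le> length w"
  unfolding word_len_std_def by (rule Least_le) blast

lemma word_len_std_attained:
  assumes "g \<in> std_generated"
  obtains u where "set u \<subseteq> std" "length u = word_len_std g" "word_eval u = g"
proof -
  from assms obtain w where "set w \<subseteq> std" "word_eval w = g" by (rule std_generatedE)
  then show ?thesis
    using LeastI_ex[of "\<lambda>n. \<exists>u. set u \<subseteq> std \<and> length u = n \<and> word_eval u = g"] that
    unfolding word_len_std_def by blast
qed

lemma word_len_std_mono_z:
  assumes "(x, y, z) \<in> std_generated"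
    and "-z \<le> t" "t \<le> z" "t - z \<in> \<int>"
  shows "word_len_std (x, y, t) \<le> word_len_std (x, y, z)"
proof -
  obtain v where v: "set v \<subseteq> std" "length v = word_len_std (x, y, z)" "word_eval v = (x, y, z)"
    by (rule word_len_std_attained[OF assms(1)])
  obtain u where "set u \<subseteq> std" "length u = length v" "word_eval u = (x, y, t)"
    using std_word_shift_z[OF v(1,3) assms(2-)] by blast
  then show ?thesis using word_len_std_le v(2) by metis
qed

lemma hmult_std_generated:
  assumes "p \<in> std_generated" "q \<in> std_generated"
  shows "hmult p q \<in> std_generated"
proof -
  obtain u v where "set u \<subseteq> std" "set v \<subseteq> std" "word_eval u = p" "word_eval v = q"
    using assms by (meson std_generatedE)
  then have "set (u @ v) \<subseteq> std" "word_eval (u @ v) = hmult p q" by auto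
  then show ?thesis by (metis std_word_mem_std_generated)
qed

lemma std_generated_int_steps:
  fixes p :: "int \<Rightarrow> heis"
  assumes "p 0 \<in> std_generated"
    and "\<And>i. hmult (p i) (word_eval up) = p (i + 1)" "set up \<subseteq> std"
    and "\<And>i. hmult (p i) (word_eval down) = p (i - 1)" "set down \<subseteq> std"
  shows "p k \<in> std_generated"
proof (induction k rule: int_induct[of _ 0])
  case (step1 i)
  then show ?case using assms(2,3) by (metis hmult_std_generated std_word_mem_std_generated)
next
  case (step2 i)
  then show ?case using assms(4,5) by (metis hmult_std_generated std_word_mem_std_generated)
qed (rule assms(1))

lemma zero_std_generated: "(0, 0, 0) \<in> std_generated"
  using std_word_mem_std_generated[of "[]"] by (simp add: hone_def)

lemma lattice_point_std_generated:
  "(of_int x, of_int y, of_int x * of_int y / 2 + of_int k) \<in> std_generated"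
proof -
  have X: "(of_int i, 0, 0) \<in> std_generated" for i :: int
    by (rule std_generated_int_steps[where p = "\<lambda>i. (of_int i, 0, 0)"
                                      and up = "[e1]" and down = "[(-1, 0, 0)]"])
       (simp_all add: zero_std_generated hmult_def hone_def e1_def std_def)
  have Y: "(0, of_int i, 0) \<in> std_generated" for i :: int
    by (rule std_generated_int_steps[where p = "\<lambda>i. (0, of_int i, 0)"
                                      and up = "[e2]" and down = "[(0, -1, 0)]"])
       (simp_all add: zero_std_generated hmult_def hone_def e2_def std_def)
  have Z: "(0, 0, of_int i) \<in> std_generated" for i :: int
    by (rule std_generated_int_steps[where p = "\<lambda>i. (0, 0, of_int i)"
                                      and up = "[e1, e2, (-1, 0, 0), (0, -1, 0)]"
                                      and down = "[e2, e1, (0, -1, 0), (-1, 0, 0)]"])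
       (simp_all add: zero_std_generated hmult_def hone_def e1_def e2_def std_def)
  have "hmult (hmult (of_int x, 0, 0) (0, of_int y, 0)) (0, 0, of_int k)
      = (of_int x, of_int y, of_int x * of_int y / 2 + of_int k)"
    by (simp add: hmult_def)
  with hmult_std_generated[OF hmult_std_generated[OF X[of x] Y[of y]] Z[of k]] show ?thesis
    by simp
qed

lemma eps_offset: "\<exists>j::int. eps x y = of_int x * of_int y / 2 + of_int j"
proof (cases "odd x \<and> odd y")
  case True
  then have "odd (x * y)" by simp
  then obtain j where "x * y = 2 * j + 1" by (rule oddE)
  then have "real_of_int (x * y) = of_int (2 * j + 1)" by simp
  then show ?thesis using True by (intro exI[of _ "-j"]) (simp add: eps_def field_simps)
next
  case False
  then have "even (x * y)" by auto
  then obtain j where "x * y = 2 * j" by (rule evenE)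
  then have "real_of_int (x * y) = of_int (2 * j)" by simp
  then show ?thesis using False by (intro exI[of _ "-j"]) (simp add: eps_def)
qed

theorem mainTheorem18:
  fixes x y :: int
  shows "mono (\<lambda>m::nat. word_len_std (real_of_int x, real_of_int y, eps x y + real m))"
proof (rule mono_iff_le_Suc[THEN iffD2], intro allI)
  fix m :: nat
  obtain j where "eps x y = of_int x * of_int y / 2 + of_int j"
    using eps_offset by blast
  then have "eps x y + real (Suc m) = of_int x * of_int y / 2 + of_int (j + int (Suc m))"
    by simp
  then have "(of_int x, of_int y, eps x y + real (Suc m)) \<in> std_generated"
    using lattice_point_std_generated[of x y "j + int (Suc m)"] by metis
  then show "word_len_std (of_int x, of_int y, eps x y + real m)
      \<le> word_len_std (of_int x, of_int y, eps x y + real (Suc m))"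
    by (rule word_len_std_mono_z) (simp_all add: eps_def)
qed

end
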